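(* Let $\mathsf{G}$ be a global type. If $\mathsf{G}$ is bounded, then its event structure $\mathcal{S}(\mathsf{G})$ is semantically bounded.
   Context: Participants are ranged over by $\mathsf{p},\mathsf{q},\mathsf{r},\mathsf{s}$ and message labels by $\lambda$. Global types are defined coinductively (and assumed regular, i.e. with finitely many distinct subtrees): $\mathsf{G} ::= \mathsf{p}\to\mathsf{q}:\{\lambda_i;\mathsf{G}_i\}_{i\in I} \mid \mathsf{End}$, with $I$ finite non-empty and the $\lambda_i$ pairwise distinct. A communication is $\alpha=\mathsf{p}\mathsf{q}\lambda$ with $\mathrm{part}(\mathsf{p}\mathsf{q}\lambda)=\{\mathsf{p},\mathsf{q}\}$; a trace is a finite sequence of communications, $\mathrm{part}$ extended to traces by union, $|\sigma|$ its length. $\mathrm{Tr}(\mathsf{End})=\emptyset$, $\mathrm{Tr}(\mathsf{p}\to\mathsf{q}:\{\lambda_i;\mathsf{G}_i\}_{i\in I})=\{\mathsf{p}\mathsf{q}\lambda_i\cdot\sigma\mid i\in I,\ \sigma=\epsilon\text{ or }\sigma\in\mathrm{Tr}(\mathsf{G}_i)\}$. Depth: $\mathrm{depth}(\mathsf{p},\sigma)=|\sigma_1\cdot\alpha|$ if $\sigma=\sigma_1\cdot\alpha\cdot\sigma_2$ with $\mathsf{p}\notin\mathrm{part}(\sigma_1)$ and $\mathsf{p}\in\mathrm{part}(\alpha)$, and $0$ otherwise; $\mathrm{depth}(\mathsf{p},\mathsf{G})=\sup\{\mathrm{depth}(\mathsf{p},\sigma)\mid\sigma\in\mathrm{Tr}(\mathsf{G})\}$.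 $\mathsf{G}$ is bounded if $\mathrm{depth}(\mathsf{p},\mathsf{G}')$ is finite for every participant $\mathsf{p}$ and every subtree $\mathsf{G}'$ of $\mathsf{G}$. Event structure of $\mathsf{G}$: permutation equivalence $\sim$ is the least equivalence on traces with $\sigma\cdot\alpha\cdot\alpha'\cdot\sigma'\sim\sigma\cdot\alpha'\cdot\alpha\cdot\sigma'$ whenever $\mathrm{part}(\alpha)\cap\mathrm{part}(\alpha')=\emptyset$; $[\sigma]$ is the class of $\sigma$. A non-empty trace $\sigma=\sigma[1]\cdots\sigma[n]$ is pointed if for every $1\le i<n$ there is $j$ with $i<j\le n$ and $\mathrm{part}(\sigma[i])\cap\mathrm{part}(\sigma[j])\ne\emptyset$. A g-event is $[\sigma]$ with $\sigma$ pointed. Causal prefixing: $\alpha\circ[\sigma]=[\alpha\cdot\sigma]$ if $\mathrm{part}(\alpha)\cap\mathrm{part}(\sigma)\ne\emptyset$, $=[\sigma]$ otherwise; $\epsilon\circ\gamma=\gamma$, $(\alpha\cdot\sigma)\circ\gamma=\alpha\circ(\sigma\circ\gamma)$. $\mathrm{ev}(\sigma\cdot\alpha)=\sigma\circ[\alpha]$. Causality: $\gamma\le\gamma'$ if $\gamma=[\sigma]$ and $\gamma'=[\sigma\cdot\sigma']$ for some $\sigma,\sigma'$. Conflict: $\gamma\#\gamma'$ if $\gamma=[\sigma\cdot\mathsf{p}\mathsf{q}\lambda_1\cdot\sigma_1]$, $\gamma'=[\sigma\cdot\mathsf{p}\mathsf{q}\lambda_2\cdot\sigma_2]$ with $\lambda_1\ne\lambda_2$.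 $\mathcal{S}(\mathsf{G})=(\mathcal{E}(\mathsf{G}),\le_{\mathsf{G}},\#_{\mathsf{G}})$ with $\mathcal{E}(\mathsf{G})=\{\mathrm{ev}(\sigma)\mid\sigma\in\mathrm{Tr}(\mathsf{G})\}$ and the relations restricted to $\mathcal{E}(\mathsf{G})$. Semantic boundedness: for an event structure $S=(E,\le,\#)$ of this kind, a participant $\mathsf{p}$ is in $\mathrm{part}(S)$ if $\mathsf{p}\in\mathrm{part}(\sigma)$ for some $[\sigma]\in E$. For $k\in\mathbb{N}$, $\mathrm{depth}^k(\mathsf{p},[\sigma])=|\sigma|$ if $\sigma=\sigma_1\cdot\alpha_1\cdots\sigma_k\cdot\alpha_k$ with $\mathsf{p}\in\mathrm{part}(\alpha_i)$ and $\mathsf{p}\notin\mathrm{part}(\sigma_i)$ for $i=1,\dots,k$, and $0$ otherwise; $\mathrm{depth}^k(\mathsf{p},S)=\sup\{\mathrm{depth}^k(\mathsf{p},\gamma)\mid\gamma\in E\}$. $S$ is semantically bounded if $\mathrm{depth}^k(\mathsf{p},S)$ is finite for every $\mathsf{p}\in\mathrm{part}(S)$ and every $k\in\mathbb{N}$. *)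

theory Defs
  imports Main
begin

codatatype ('p, 'l) gtype =
    End
  | Msg 'p 'p "('l \<times> ('p, 'l) gtype) list"

inductive subtree :: "('p, 'l) gtype \<Rightarrow> ('p, 'l) gtype \<Rightarrow> bool" where
  subtree_refl: "subtree G G"
| subtree_step: "(l, G') \<in> set bs \<Longrightarrow> subtree G'' G' \<Longrightarrow> subtree G'' (Msg p q bs)"

definition regular :: "('p, 'l) gtype \<Rightarrow> bool" where
  "regular G \<longleftrightarrow> finite {G'. subtree G' G}"

definition wf_branching :: "('p, 'l) gtype \<Rightarrow> bool" where
  "wf_branching G \<longleftrightarrow> (\<forall>G'. subtree G' G \<longrightarrow>
      (case G' of End \<Rightarrow> True | Msg p q bs \<Rightarrow> bs \<noteq> [] \<and> distinct (map fst bs)))"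

definition global_type :: "('p, 'l) gtype \<Rightarrow> bool" where
  "global_type G \<longleftrightarrow> regular G \<and> wf_branching G"

type_synonym ('p, 'l) comm = "'p \<times> 'p \<times> 'l"
type_synonym ('p, 'l) trace = "('p, 'l) comm list"

fun part :: "('p, 'l) comm \<Rightarrow> 'p set" where
  "part (p, q, l) = {p, q}"

definition part_tr :: "('p, 'l) trace \<Rightarrow> 'p set" where
  "part_tr \<sigma> = (\<Union>a \<in> set \<sigma>. part a)"

inductive trace_of :: "('p, 'l) trace \<Rightarrow> ('p, 'l) gtype \<Rightarrow> bool" where
  Tr_single: "(l, G') \<in> set bs \<Longrightarrow> trace_of [(p, q, l)] (Msg p q bs)"
| Tr_cons: "(l, G') \<in> set bs \<Longrightarrow> trace_of \<sigma> G' \<Longrightarrow> trace_of ((p, q, l) # \<sigma>) (Msg p q bs)"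

definition Tr :: "('p, 'l) gtype \<Rightarrow> ('p, 'l) trace set" where
  "Tr G = {\<sigma>. trace_of \<sigma> G}"

definition depth_tr :: "'p \<Rightarrow> ('p, 'l) trace \<Rightarrow> nat" where
  "depth_tr p \<sigma> =
     (if \<exists>\<sigma>1 \<alpha> \<sigma>2. \<sigma> = \<sigma>1 @ \<alpha> # \<sigma>2 \<and> p \<notin> part_tr \<sigma>1 \<and> p \<in> part \<alpha>
      then (THE n. \<exists>\<sigma>1 \<alpha> \<sigma>2. \<sigma> = \<sigma>1 @ \<alpha> # \<sigma>2 \<and> p \<notin> part_tr \<sigma>1 \<and> p \<in> part \<alpha>
                    \<and> n = length (\<sigma>1 @ [\<alpha>]))
      else 0)"

text \<open>depth(p,G) is finite iff the set of trace depths is bounded above.\<close>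
definition bounded :: "('p, 'l) gtype \<Rightarrow> bool" where
  "bounded G \<longleftrightarrow> (\<forall>G' p. subtree G' G \<longrightarrow> bdd_above (depth_tr p ` Tr G'))"

inductive perm_step :: "('p, 'l) trace \<Rightarrow> ('p, 'l) trace \<Rightarrow> bool" where
  "part \<alpha> \<inter> part \<alpha>' = {} \<Longrightarrow> perm_step (\<sigma> @ \<alpha> # \<alpha>' # \<sigma>') (\<sigma> @ \<alpha>' # \<alpha> # \<sigma>')"

definition perm_eq :: "('p, 'l) trace \<Rightarrow> ('p, 'l) trace \<Rightarrow> bool" where
  "perm_eq = equivclp perm_step"

type_synonym ('p, 'l) gevent = "('p, 'l) trace set"

definition cls :: "('p, 'l) trace \<Rightarrow> ('p, 'l) gevent" where
  "cls \<sigma> = {\<tau>. perm_eq \<sigma> \<tau>}"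

definition pointed :: "('p, 'l) trace \<Rightarrow> bool" where
  "pointed \<sigma> \<longleftrightarrow> \<sigma> \<noteq> [] \<and>
     (\<forall>i. i + 1 < length \<sigma> \<longrightarrow> (\<exists>j. i < j \<and> j < length \<sigma> \<and> part (\<sigma> ! i) \<inter> part (\<sigma> ! j) \<noteq> {}))"

definition is_gevent :: "('p, 'l) gevent \<Rightarrow> bool" where
  "is_gevent \<gamma> \<longleftrightarrow> (\<exists>\<sigma>. pointed \<sigma> \<and> \<gamma> = cls \<sigma>)"

definition part_ev :: "('p, 'l) gevent \<Rightarrow> 'p set" where
  "part_ev \<gamma> = (\<Union>\<sigma> \<in> \<gamma>. part_tr \<sigma>)"

definition cpre :: "('p, 'l) comm \<Rightarrow> ('p, 'l) gevent \<Rightarrow> ('p, 'l) gevent" where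
  "cpre \<alpha> \<gamma> = (if part \<alpha> \<inter> part_ev \<gamma> \<noteq> {}
                then {\<tau>. \<exists>\<sigma> \<in> \<gamma>. perm_eq (\<alpha> # \<sigma>) \<tau>} else \<gamma>)"

fun cpre_tr :: "('p, 'l) trace \<Rightarrow> ('p, 'l) gevent \<Rightarrow> ('p, 'l) gevent" where
  "cpre_tr [] \<gamma> = \<gamma>"
| "cpre_tr (\<alpha> # \<sigma>) \<gamma> = cpre \<alpha> (cpre_tr \<sigma> \<gamma>)"

text \<open>ev(sigma . alpha) = sigma o [alpha] (only applied to non-empty traces).\<close>
definition ev :: "('p, 'l) trace \<Rightarrow> ('p, 'l) gevent" where
  "ev \<sigma> = cpre_tr (butlast \<sigma>) (cls [last \<sigma>])"

definition causal :: "('p, 'l) gevent \<Rightarrow> ('p, 'l) gevent \<Rightarrow> bool" where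
  "causal \<gamma> \<gamma>' \<longleftrightarrow> (\<exists>\<sigma> \<sigma>'. \<gamma> = cls \<sigma> \<and> \<gamma>' = cls (\<sigma> @ \<sigma>'))"

definition conflict :: "('p, 'l) gevent \<Rightarrow> ('p, 'l) gevent \<Rightarrow> bool" where
  "conflict \<gamma> \<gamma>' \<longleftrightarrow> (\<exists>\<sigma> p q l1 l2 \<sigma>1 \<sigma>2. l1 \<noteq> l2 \<and>
      \<gamma> = cls (\<sigma> @ (p, q, l1) # \<sigma>1) \<and> \<gamma>' = cls (\<sigma> @ (p, q, l2) # \<sigma>2))"

definition events :: "('p, 'l) gtype \<Rightarrow> ('p, 'l) gevent set" where
  "events G = ev ` Tr G"

type_synonym ('p, 'l) evstruct =
  "('p, 'l) gevent set \<times> (('p, 'l) gevent \<Rightarrow> ('p, 'l) gevent \<Rightarrow> bool)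
                        \<times> (('p, 'l) gevent \<Rightarrow> ('p, 'l) gevent \<Rightarrow> bool)"

definition evstruct_of :: "('p, 'l) gtype \<Rightarrow> ('p, 'l) evstruct" where
  "evstruct_of G =
     (events G,
      (\<lambda>\<gamma> \<gamma>'. \<gamma> \<in> events G \<and> \<gamma>' \<in> events G \<and> causal \<gamma> \<gamma>'),
      (\<lambda>\<gamma> \<gamma>'. \<gamma> \<in> events G \<and> \<gamma>' \<in> events G \<and> conflict \<gamma> \<gamma>'))"

definition part_es :: "('p, 'l) evstruct \<Rightarrow> 'p set" where
  "part_es S = {p. \<exists>\<gamma> \<in> fst S. \<exists>\<sigma> \<in> \<gamma>. p \<in> part_tr \<sigma>}"

definition kdecomp :: "nat \<Rightarrow> 'p \<Rightarrow> ('p, 'l) trace \<Rightarrow> bool" where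
  "kdecomp k p \<sigma> \<longleftrightarrow> (\<exists>xs. length xs = k \<and> \<sigma> = concat (map (\<lambda>(s, a). s @ [a]) xs) \<and>
       (\<forall>(s, a) \<in> set xs. p \<in> part a \<and> p \<notin> part_tr s))"

definition depthk :: "nat \<Rightarrow> 'p \<Rightarrow> ('p, 'l) gevent \<Rightarrow> nat" where
  "depthk k p \<gamma> =
     (if \<exists>\<sigma> \<in> \<gamma>. kdecomp k p \<sigma> then (THE n. \<exists>\<sigma> \<in> \<gamma>. kdecomp k p \<sigma> \<and> n = length \<sigma>) else 0)"

definition sem_bounded :: "('p, 'l) evstruct \<Rightarrow> bool" where
  "sem_bounded S \<longleftrightarrow> (\<forall>p \<in> part_es S. \<forall>k. bdd_above (depthk k p ` fst S))"

end

theory Submission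
  imports Defs
begin

text \<open>
  Since \<open>G\<close> is regular and bounded, there is a single \<open>D\<close> such that in every trace of every
  subtree of \<open>G\<close> a participant \<open>p\<close> acts within the first \<open>D\<close> communications. Peeling off one
  \<open>p\<close>-communication at a time, a trace of \<open>G\<close> that ends with a \<open>p\<close>-communication has length at
  most \<open>D\<close> times its number of \<open>p\<close>-communications.

  An event \<open>ev \<sigma>\<close> is the class of a pointed trace \<open>\<mu>\<close>, no longer than \<open>\<sigma>\<close>, with the same
  last communication and, for the participants of that communication, the same number of
  communications as \<open>\<sigma>\<close>. Permutation preserves the last communication of a pointed trace, so
  if some \<open>\<tau> \<sim> \<mu>\<close> decomposes into \<open>k\<close> blocks each ending in the next \<open>p\<close>-communication, then \<open>p\<close>
  takes part in the last communication of \<open>\<sigma>\<close> and \<open>\<sigma>\<close> has exactly \<open>k\<close> \<open>p\<close>-communications.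
  Hence the \<open>k\<close>-depth of \<open>p\<close> in \<open>ev \<sigma>\<close> is at most \<open>k * D\<close>.
\<close>

fun pointed_rec :: "('p, 'l) trace \<Rightarrow> bool" where
  "pointed_rec [] = False"
| "pointed_rec [a] = True"
| "pointed_rec (a # b # xs) \<longleftrightarrow> pointed_rec (b # xs) \<and> part a \<inter> part_tr (b # xs) \<noteq> {}"

definition part_count :: "'p \<Rightarrow> ('p, 'l) trace \<Rightarrow> nat" where
  "part_count p \<sigma> = length (filter (\<lambda>\<alpha>. p \<in> part \<alpha>) \<sigma>)"

lemma part_tr_simps [simp]:
  "part_tr [] = {}"
  "part_tr (\<alpha> # \<sigma>) = part \<alpha> \<union> part_tr \<sigma>"
  "part_tr (\<sigma> @ \<sigma>') = part_tr \<sigma> \<union> part_tr \<sigma>'"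
  by (auto simp: part_tr_def)

lemma part_last_subset_part_tr: "\<sigma> \<noteq> [] \<Longrightarrow> part (last \<sigma>) \<subseteq> part_tr \<sigma>"
  by (induction \<sigma>) auto

lemma perm_step_sym: "perm_step \<sigma> \<tau> \<Longrightarrow> perm_step \<tau> \<sigma>"
  by (induction rule: perm_step.induct) (metis inf_commute perm_step.intros)

lemma perm_step_length: "perm_step \<sigma> \<tau> \<Longrightarrow> length \<sigma> = length \<tau>"
  by (induction rule: perm_step.induct) auto

lemma perm_step_part_tr: "perm_step \<sigma> \<tau> \<Longrightarrow> part_tr \<sigma> = part_tr \<tau>"
  by (induction rule: perm_step.induct) auto

lemma perm_step_part_count: "perm_step \<sigma> \<tau> \<Longrightarrow> part_count p \<sigma> = part_count p \<tau>"
  by (induction rule: perm_step.induct) (auto simp: part_count_def)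

lemma pointed_rec_last_two_overlap: "pointed_rec (\<sigma> @ [\<alpha>, \<beta>]) \<Longrightarrow> part \<alpha> \<inter> part \<beta> \<noteq> {}"
proof (induction \<sigma>)
  case Nil
  then show ?case by simp
next
  case (Cons x \<sigma>)
  then show ?case by (cases \<sigma>) auto
qed

lemma pointed_rec_swap:
  assumes "part \<alpha> \<inter> part \<beta> = {}" and "pointed_rec (\<sigma> @ \<alpha> # \<beta> # \<sigma>')"
  shows "pointed_rec (\<sigma> @ \<beta> # \<alpha> # \<sigma>') \<and> \<sigma>' \<noteq> []"
  using assms
proof (induction \<sigma>)
  case Nil
  then obtain \<gamma> \<sigma>'' where "\<sigma>' = \<gamma> # \<sigma>''"
    using pointed_rec_last_two_overlap[of "[]" \<alpha> \<beta>] by (cases \<sigma>') auto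
  then show ?case using Nil by auto
next
  case (Cons x \<sigma>)
  then show ?case by (cases \<sigma>) auto
qed

text \<open>Swapping two independent communications never moves the last one of a pointed trace,
  because its last two communications share a participant.\<close>
lemma perm_step_pointed_rec:
  "perm_step \<sigma> \<tau> \<Longrightarrow> pointed_rec \<sigma> \<Longrightarrow> pointed_rec \<tau> \<and> last \<tau> = last \<sigma>"
  by (induction rule: perm_step.induct) (use pointed_rec_swap in fastforce)

lemma equivclp_invariant:
  assumes "equivclp r x y" and "\<And>x y. r x y \<Longrightarrow> f x = f y"
  shows "f x = f y"
  using assms(1) by (induction rule: equivclp_induct) (auto dest: assms(2))

lemma perm_eq_length: "perm_eq \<sigma> \<tau> \<Longrightarrow> length \<sigma> = length \<tau>"
  unfolding perm_eq_def by (erule equivclp_invariant[where f = length]) (rule perm_step_length)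

lemma perm_eq_part_tr: "perm_eq \<sigma> \<tau> \<Longrightarrow> part_tr \<sigma> = part_tr \<tau>"
  unfolding perm_eq_def by (erule equivclp_invariant[where f = part_tr]) (rule perm_step_part_tr)

lemma perm_eq_part_count: "perm_eq \<sigma> \<tau> \<Longrightarrow> part_count p \<sigma> = part_count p \<tau>"
  unfolding perm_eq_def by (erule equivclp_invariant[where f = "part_count p"]) (rule perm_step_part_count)

lemma perm_eq_pointed_rec:
  assumes "perm_eq \<sigma> \<tau>" and "pointed_rec \<sigma>"
  shows "pointed_rec \<tau> \<and> last \<tau> = last \<sigma>"
  using assms(1) unfolding perm_eq_def
proof (induction rule: equivclp_induct)
  case base
  then show ?case using assms(2) by simp
next
  case (step \<tau> \<tau>')
  then show ?case by (metis perm_step_pointed_rec perm_step_sym)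
qed

lemma perm_eq_trans: "perm_eq \<sigma> \<rho> \<Longrightarrow> perm_eq \<rho> \<tau> \<Longrightarrow> perm_eq \<sigma> \<tau>"
  unfolding perm_eq_def by (rule equivclp_trans)

lemma perm_eq_Cons: "perm_eq \<sigma> \<tau> \<Longrightarrow> perm_eq (\<alpha> # \<sigma>) (\<alpha> # \<tau>)"
  unfolding perm_eq_def
proof (induction rule: equivclp_induct)
  case base
  then show ?case by simp
next
  case (step \<tau> \<tau>')
  have "perm_step (\<alpha> # \<tau>) (\<alpha> # \<tau>') \<or> perm_step (\<alpha> # \<tau>') (\<alpha> # \<tau>)"
    using step(2)
    by (auto elim!: perm_step.cases intro: perm_step.intros[where \<sigma> = "\<alpha> # _", simplified])
  then show ?case using step(3) equivclp_into_equivclp by metis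
qed

lemma mem_cls_iff: "\<tau> \<in> cls \<sigma> \<longleftrightarrow> perm_eq \<sigma> \<tau>"
  by (simp add: cls_def)

lemma self_mem_cls: "\<sigma> \<in> cls \<sigma>"
  by (simp add: cls_def perm_eq_def)

lemma part_ev_cls: "part_ev (cls \<sigma>) = part_tr \<sigma>"
proof -
  have "part_tr \<tau> = part_tr \<sigma>" if "\<tau> \<in> cls \<sigma>" for \<tau>
    using that by (simp add: mem_cls_iff perm_eq_part_tr)
  then show ?thesis unfolding part_ev_def using self_mem_cls by auto
qed

lemma cpre_cls:
  "cpre \<alpha> (cls \<sigma>) = (if part \<alpha> \<inter> part_tr \<sigma> \<noteq> {} then cls (\<alpha> # \<sigma>) else cls \<sigma>)"
proof -
  have "{\<tau>. \<exists>\<rho> \<in> cls \<sigma>. perm_eq (\<alpha> # \<rho>) \<tau>} = cls (\<alpha> # \<sigma>)"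
  proof (intro set_eqI iffI)
    fix \<tau>
    assume "\<tau> \<in> {\<tau>. \<exists>\<rho> \<in> cls \<sigma>. perm_eq (\<alpha> # \<rho>) \<tau>}"
    then show "\<tau> \<in> cls (\<alpha> # \<sigma>)" by (auto simp: mem_cls_iff intro: perm_eq_trans[OF perm_eq_Cons])
  qed (use self_mem_cls[of \<sigma>] in \<open>auto simp: mem_cls_iff\<close>)
  then show ?thesis by (simp add: cpre_def part_ev_cls)
qed

lemma cpre_tr_cls_singleton:
  "\<exists>\<mu>. cpre_tr \<rho> (cls [\<beta>]) = cls \<mu> \<and> pointed_rec \<mu> \<and> last \<mu> = \<beta> \<and> length \<mu> \<le> Suc (length \<rho>)
      \<and> (\<forall>p \<in> part \<beta>. part_count p \<mu> = Suc (part_count p \<rho>))"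
proof (induction \<rho>)
  case Nil
  show ?case by (rule exI[of _ "[\<beta>]"]) (simp add: part_count_def)
next
  case (Cons \<alpha> \<rho>)
  then obtain \<mu> where \<mu>: "cpre_tr \<rho> (cls [\<beta>]) = cls \<mu>" "pointed_rec \<mu>" "last \<mu> = \<beta>"
    "length \<mu> \<le> Suc (length \<rho>)" "\<forall>p \<in> part \<beta>. part_count p \<mu> = Suc (part_count p \<rho>)"
    by blast
  have "\<mu> \<noteq> []" using \<mu>(2) by auto
  show ?case
  proof (cases "part \<alpha> \<inter> part_tr \<mu> \<noteq> {}")
    case True
    have "cpre_tr (\<alpha> # \<rho>) (cls [\<beta>]) = cls (\<alpha> # \<mu>)" using True \<mu>(1) by (simp add: cpre_cls)
    moreover have "pointed_rec (\<alpha> # \<mu>)" using \<open>\<mu> \<noteq> []\<close> \<mu>(2) True by (cases \<mu>) auto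
    moreover have "\<forall>p \<in> part \<beta>. part_count p (\<alpha> # \<mu>) = Suc (part_count p (\<alpha> # \<rho>))"
      using \<mu>(5) by (simp add: part_count_def)
    ultimately show ?thesis using \<mu>(3,4) \<open>\<mu> \<noteq> []\<close> by (intro exI[of _ "\<alpha> # \<mu>"]) simp
  next
    case False
    have "cpre_tr (\<alpha> # \<rho>) (cls [\<beta>]) = cls \<mu>" using False \<mu>(1) by (simp add: cpre_cls)
    moreover have "part \<beta> \<inter> part \<alpha> = {}"
      using False part_last_subset_part_tr[OF \<open>\<mu> \<noteq> []\<close>] \<mu>(3) by blast
    then have "\<forall>p \<in> part \<beta>. part_count p \<mu> = Suc (part_count p (\<alpha> # \<rho>))"
      using \<mu>(5) by (auto simp: part_count_def)
    ultimately show ?thesis using \<mu>(2-4) by (intro exI[of _ \<mu>]) simp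
  qed
qed

lemma ev_eq_cls_pointed:
  assumes "\<sigma> \<noteq> []"
  obtains \<mu> where "ev \<sigma> = cls \<mu>" "pointed_rec \<mu>" "last \<mu> = last \<sigma>" "length \<mu> \<le> length \<sigma>"
    "\<forall>p \<in> part (last \<sigma>). part_count p \<mu> = part_count p \<sigma>"
proof -
  obtain \<rho> \<alpha> where \<sigma>: "\<sigma> = \<rho> @ [\<alpha>]" using assms by (metis rev_exhaust)
  obtain \<mu> where \<mu>: "cpre_tr \<rho> (cls [\<alpha>]) = cls \<mu>" "pointed_rec \<mu>" "last \<mu> = \<alpha>"
    "length \<mu> \<le> Suc (length \<rho>)" "\<forall>p \<in> part \<alpha>. part_count p \<mu> = Suc (part_count p \<rho>)"
    using cpre_tr_cls_singleton[of \<rho> \<alpha>] by blast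
  show thesis
  proof (rule that)
    show "ev \<sigma> = cls \<mu>" using \<mu>(1) by (simp add: \<sigma> ev_def)
    show "\<forall>p \<in> part (last \<sigma>). part_count p \<mu> = part_count p \<sigma>"
      using \<mu>(5) by (simp add: \<sigma> part_count_def)
  qed (use \<mu> in \<open>simp_all add: \<sigma>\<close>)
qed

lemma subtree_trans: "subtree G' G \<Longrightarrow> subtree G'' G' \<Longrightarrow> subtree G'' G"
  by (induction rule: subtree.induct) (auto intro: subtree.intros)

lemma trace_of_Nil: "trace_of \<sigma> G \<Longrightarrow> \<sigma> \<noteq> []"
  by (induction rule: trace_of.induct) auto

lemma trace_of_prefix: "trace_of (\<sigma> @ \<sigma>') G \<Longrightarrow> \<sigma> \<noteq> [] \<Longrightarrow> trace_of \<sigma> G"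
proof (induction "\<sigma> @ \<sigma>'" G arbitrary: \<sigma> rule: trace_of.induct)
  case (Tr_single l G' bs p q)
  then show ?case by (cases \<sigma>) (auto intro: trace_of.intros)
next
  case (Tr_cons l G' bs \<rho> p q)
  then obtain \<sigma>\<^sub>0 where "\<sigma> = (p, q, l) # \<sigma>\<^sub>0" "\<rho> = \<sigma>\<^sub>0 @ \<sigma>'" by (cases \<sigma>) auto
  with Tr_cons show ?case by (cases "\<sigma>\<^sub>0 = []") (auto intro: trace_of.intros)
qed

lemma trace_of_suffix:
  "trace_of (\<sigma> @ \<sigma>') G \<Longrightarrow> \<sigma> \<noteq> [] \<Longrightarrow> \<sigma>' \<noteq> [] \<Longrightarrow> \<exists>G'. subtree G' G \<and> trace_of \<sigma>' G'"
proof (induction "\<sigma> @ \<sigma>'" G arbitrary: \<sigma> rule: trace_of.induct)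
  case (Tr_single l G' bs p q)
  then show ?case by (cases \<sigma>) auto
next
  case (Tr_cons l G' bs \<rho> p q)
  then obtain \<sigma>\<^sub>0 where "\<sigma> = (p, q, l) # \<sigma>\<^sub>0" "\<rho> = \<sigma>\<^sub>0 @ \<sigma>'" by (cases \<sigma>) auto
  with Tr_cons show ?case by (cases "\<sigma>\<^sub>0 = []") (auto intro: subtree.intros)
qed

lemma first_occurrence_unique:
  assumes "\<sigma> @ \<alpha> # \<sigma>' = \<tau> @ \<beta> # \<tau>'" and "p \<notin> part_tr \<sigma>" "p \<notin> part_tr \<tau>" "p \<in> part \<alpha>" "p \<in> part \<beta>"
  shows "\<sigma> = \<tau>"
  using assms
proof (induction \<sigma> arbitrary: \<tau>)
  case Nil
  then show ?case by (cases \<tau>) auto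
next
  case (Cons x \<sigma>)
  then show ?case by (cases \<tau>) auto
qed

lemma depth_tr_first_occurrence:
  assumes "p \<notin> part_tr \<sigma>" and "p \<in> part \<alpha>"
  shows "depth_tr p (\<sigma> @ [\<alpha>]) = Suc (length \<sigma>)"
proof -
  have first: "\<exists>\<sigma>\<^sub>1 \<alpha>' \<sigma>\<^sub>2. \<sigma> @ [\<alpha>] = \<sigma>\<^sub>1 @ \<alpha>' # \<sigma>\<^sub>2 \<and> p \<notin> part_tr \<sigma>\<^sub>1 \<and> p \<in> part \<alpha>'"
    using assms by blast
  have "(THE n. \<exists>\<sigma>\<^sub>1 \<alpha>' \<sigma>\<^sub>2. \<sigma> @ [\<alpha>] = \<sigma>\<^sub>1 @ \<alpha>' # \<sigma>\<^sub>2 \<and> p \<notin> part_tr \<sigma>\<^sub>1 \<and> p \<in> part \<alpha>'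
              \<and> n = length (\<sigma>\<^sub>1 @ [\<alpha>'])) = Suc (length \<sigma>)"
  proof (rule the_equality)
    fix n
    assume "\<exists>\<sigma>\<^sub>1 \<alpha>' \<sigma>\<^sub>2. \<sigma> @ [\<alpha>] = \<sigma>\<^sub>1 @ \<alpha>' # \<sigma>\<^sub>2 \<and> p \<notin> part_tr \<sigma>\<^sub>1 \<and> p \<in> part \<alpha>'
              \<and> n = length (\<sigma>\<^sub>1 @ [\<alpha>'])"
    then obtain \<sigma>\<^sub>1 \<alpha>' \<sigma>\<^sub>2 where "\<sigma> @ [\<alpha>] = \<sigma>\<^sub>1 @ \<alpha>' # \<sigma>\<^sub>2" "p \<notin> part_tr \<sigma>\<^sub>1" "p \<in> part \<alpha>'"
      and n: "n = length (\<sigma>\<^sub>1 @ [\<alpha>'])" by blast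
    then have "\<sigma>\<^sub>1 = \<sigma>" using first_occurrence_unique[of \<sigma>\<^sub>1 \<alpha>' \<sigma>\<^sub>2 \<sigma> \<alpha> "[]" p] assms by simp
    then show "n = Suc (length \<sigma>)" using n by simp
  qed (use assms in \<open>intro exI[of _ \<sigma>] exI[of _ \<alpha>] exI[of _ "[]"], simp\<close>)
  then show ?thesis using first unfolding depth_tr_def by simp
qed

lemma length_le_part_count_mult:
  assumes D: "\<And>G' \<tau>. subtree G' G \<Longrightarrow> trace_of \<tau> G' \<Longrightarrow> depth_tr p \<tau> \<le> D"
    and "subtree G' G" "trace_of \<sigma> G'" "p \<in> part (last \<sigma>)"
  shows "length \<sigma> \<le> part_count p \<sigma> * D"
  using assms(2-)
proof (induction "length \<sigma>" arbitrary: \<sigma> G' rule: less_induct)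
  case less
  have "\<sigma> \<noteq> []" using less(3) by (rule trace_of_Nil)
  then have "\<exists>\<alpha> \<in> set \<sigma>. p \<in> part \<alpha>" using less(4) last_in_set by blast
  from split_list_first_prop[OF this]
  obtain \<rho> \<alpha> \<sigma>' where \<sigma>: "\<sigma> = \<rho> @ \<alpha> # \<sigma>'" "p \<in> part \<alpha>" "\<forall>\<beta> \<in> set \<rho>. p \<notin> part \<beta>"
    by blast
  have "p \<notin> part_tr \<rho>" and "part_count p \<rho> = 0"
    using \<sigma>(3) by (auto simp: part_tr_def part_count_def filter_empty_conv)
  have "trace_of (\<rho> @ [\<alpha>]) G'" using trace_of_prefix[of "\<rho> @ [\<alpha>]" \<sigma>' G'] less(3) \<sigma>(1) by simp
  then have "Suc (length \<rho>) \<le> D"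
    using D[OF less(2)] depth_tr_first_occurrence[OF \<open>p \<notin> part_tr \<rho>\<close> \<sigma>(2)] by metis
  show ?case
  proof (cases "\<sigma>' = []")
    case True
    then show ?thesis using \<sigma> \<open>Suc (length \<rho>) \<le> D\<close> \<open>part_count p \<rho> = 0\<close> by (simp add: part_count_def)
  next
    case False
    then obtain G'' where "subtree G'' G'" "trace_of \<sigma>' G''"
      using trace_of_suffix[of "\<rho> @ [\<alpha>]" \<sigma>' G'] less(3) \<sigma>(1) by auto
    moreover have "p \<in> part (last \<sigma>')" using less(4) \<sigma>(1) False by simp
    ultimately have "length \<sigma>' \<le> part_count p \<sigma>' * D"
      using less(1)[of \<sigma>' G''] \<sigma>(1) subtree_trans[OF less(2)] by simp
    moreover have "part_count p \<sigma> = Suc (part_count p \<sigma>')"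
      using \<sigma> \<open>part_count p \<rho> = 0\<close> by (simp add: part_count_def)
    ultimately show ?thesis using \<sigma>(1) \<open>Suc (length \<rho>) \<le> D\<close> by simp
  qed
qed

lemma uniform_depth_bound:
  assumes "global_type G" and "bounded G"
  obtains D where "\<And>G' \<sigma>. subtree G' G \<Longrightarrow> trace_of \<sigma> G' \<Longrightarrow> depth_tr p \<sigma> \<le> D"
proof -
  have "finite {G'. subtree G' G}" using assms(1) by (simp add: global_type_def regular_def)
  then have "bdd_above (\<Union>G' \<in> {G'. subtree G' G}. depth_tr p ` Tr G')"
    using assms(2) by (simp add: bounded_def)
  then show thesis using that unfolding bdd_above_def Tr_def by blast
qed

lemma kdecomp_0: "kdecomp 0 p \<tau> \<longleftrightarrow> \<tau> = []"
  by (simp add: kdecomp_def)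

lemma kdecomp_SucE:
  assumes "kdecomp (Suc k) p \<tau>"
  obtains \<tau>\<^sub>0 \<rho> \<alpha> where "kdecomp k p \<tau>\<^sub>0" "\<tau> = \<tau>\<^sub>0 @ \<rho> @ [\<alpha>]" "p \<notin> part_tr \<rho>" "p \<in> part \<alpha>"
proof -
  obtain xs where xs: "length xs = Suc k" "\<tau> = concat (map (\<lambda>(s, a). s @ [a]) xs)"
    "\<forall>(s, a) \<in> set xs. p \<in> part a \<and> p \<notin> part_tr s"
    using assms unfolding kdecomp_def by blast
  then obtain ys \<rho> \<alpha> where "xs = ys @ [(\<rho>, \<alpha>)]" by (cases xs rule: rev_cases) auto
  with xs show thesis by (intro that[of "concat (map (\<lambda>(s, a). s @ [a]) ys)" \<rho> \<alpha>]) (auto simp: kdecomp_def)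
qed

lemma kdecomp_part_count: "kdecomp k p \<tau> \<Longrightarrow> part_count p \<tau> = k"
proof (induction k arbitrary: \<tau>)
  case 0
  then show ?case by (simp add: kdecomp_0 part_count_def)
next
  case (Suc k)
  then show ?case
    by (elim kdecomp_SucE) (auto simp: part_count_def part_tr_def filter_empty_conv)
qed

lemma kdecomp_Suc_last: "kdecomp (Suc k) p \<tau> \<Longrightarrow> \<tau> \<noteq> [] \<and> p \<in> part (last \<tau>)"
  by (elim kdecomp_SucE) simp

lemma depthk_cls:
  assumes "\<exists>\<tau> \<in> cls \<mu>. kdecomp k p \<tau>"
  shows "depthk k p (cls \<mu>) = length \<mu>"
proof -
  have "(THE n. \<exists>\<tau> \<in> cls \<mu>. kdecomp k p \<tau> \<and> n = length \<tau>) = length \<mu>"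
  proof (rule the_equality)
    show "\<exists>\<tau> \<in> cls \<mu>. kdecomp k p \<tau> \<and> length \<mu> = length \<tau>"
      using assms by (metis mem_cls_iff perm_eq_length)
  qed (metis mem_cls_iff perm_eq_length)
  then show ?thesis using assms unfolding depthk_def by simp
qed

lemma depthk_ev_le:
  assumes D: "\<And>G' \<tau>. subtree G' G \<Longrightarrow> trace_of \<tau> G' \<Longrightarrow> depth_tr p \<tau> \<le> D"
    and "trace_of \<sigma> G"
  shows "depthk k p (ev \<sigma>) \<le> k * D"
proof -
  obtain \<mu> where \<mu>: "ev \<sigma> = cls \<mu>" "pointed_rec \<mu>" "last \<mu> = last \<sigma>" "length \<mu> \<le> length \<sigma>"
    "\<forall>p \<in> part (last \<sigma>). part_count p \<mu> = part_count p \<sigma>"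
    using ev_eq_cls_pointed trace_of_Nil[OF assms(2)] by metis
  show ?thesis
  proof (cases "\<exists>\<tau> \<in> cls \<mu>. kdecomp k p \<tau>")
    case False
    then show ?thesis using \<mu>(1) by (simp add: depthk_def)
  next
    case True
    then obtain \<tau> where "perm_eq \<mu> \<tau>" "kdecomp k p \<tau>" by (auto simp: mem_cls_iff)
    have "k \<noteq> 0"
    proof
      assume "k = 0"
      then have "\<mu> = []"
        using \<open>kdecomp k p \<tau>\<close> perm_eq_length[OF \<open>perm_eq \<mu> \<tau>\<close>] by (simp add: kdecomp_0)
      then show False using \<mu>(2) by simp
    qed
    then have "p \<in> part (last \<tau>)"
      using \<open>kdecomp k p \<tau>\<close> kdecomp_Suc_last by (metis not0_implies_Suc)
    moreover have "last \<tau> = last \<sigma>" using perm_eq_pointed_rec[OF \<open>perm_eq \<mu> \<tau>\<close> \<mu>(2)] \<mu>(3) by simp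
    ultimately have "p \<in> part (last \<sigma>)" by simp
    then have "part_count p \<sigma> = k"
      using \<mu>(5) perm_eq_part_count[OF \<open>perm_eq \<mu> \<tau>\<close>] kdecomp_part_count[OF \<open>kdecomp k p \<tau>\<close>] by simp
    then have "length \<sigma> \<le> k * D"
      using length_le_part_count_mult[OF D subtree_refl assms(2) \<open>p \<in> part (last \<sigma>)\<close>] by simp
    then show ?thesis using \<mu>(1,4) depthk_cls[OF True] by simp
  qed
qed

theorem mainTheorem4:
  fixes G :: "('p, 'l) gtype"
  assumes "global_type G"
    and "bounded G"
  shows "sem_bounded (evstruct_of G)"
  unfolding sem_bounded_def
proof (intro ballI allI)
  fix p :: 'p and k :: nat
  obtain D where D: "\<And>G' \<sigma>. subtree G' G \<Longrightarrow> trace_of \<sigma> G' \<Longrightarrow> depth_tr p \<sigma> \<le> D"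
    using uniform_depth_bound[OF assms] by blast
  have "depthk k p (ev \<sigma>) \<le> k * D" if "trace_of \<sigma> G" for \<sigma>
    using depthk_ev_le[OF D that] .
  then have "\<gamma> \<in> events G \<Longrightarrow> depthk k p \<gamma> \<le> k * D" for \<gamma>
    unfolding events_def Tr_def by blast
  then show "bdd_above (depthk k p ` fst (evstruct_of G))"
    unfolding evstruct_of_def fst_conv by (rule bdd_aboveI2)
qed

end
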